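(* Let $p$ be a prime, $n\geq 2$, $T=Tr(\mathbb{Z}_{p^n})$ and $G=\Gamma(T)$. Let $X$ be the set of nonzero zero-divisors of $\mathbb{Z}_{p^n}$ (i.e. the nonzero multiples of $p$), and let $$A_4^*=\left\{\begin{pmatrix}m+z&0\\0&z\end{pmatrix}\middle| m\in X,z\in\mathbb{Z}_{p^n}\right\},\ A_5^*=\left\{\begin{pmatrix}z&m\\0&z\end{pmatrix}\middle| m\in X,z\in\mathbb{Z}_{p^n}\right\},\ A_6^*=\left\{\begin{pmatrix}m_1+z&m_2\\0&z\end{pmatrix}\middle| m_1,m_2\in X,z\in\mathbb{Z}_{p^n}\right\},$$ and for a set $A^*$ of vertices write $d(A^* )=\sum_{B\in A^*}d(B)$. Then (i) $d(A_4^* )=d(A_5^* )=(p-1)\,p^{2n-1}\sum_{r=1}^{n-1}\left(p^{2n}-p^{n-r}-p^{-r}\right)$; (ii) $d(A_6^* )=2\alpha-\beta$, where $$\alpha=(p-1)\,p^{2n-1}\sum_{r=1}^{n-1}\Big((p^{3n}+p^n+1)p^{-r}-(p^{2n}+p^n)p^{-2r}-p^{2n}\Big),$$ $$\beta=(p-1)^2\sum_{r=1}^{n-1}p^{3n-2r-2}\left(p^{2n+r}-p^n-1\right).$$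
   Context: For a ring $S$ with identity whose center $Z(S)$ is not all of $S$, the commuting graph $\Gamma(S)$ is the simple graph with vertex set $S\setminus Z(S)$, in which two distinct vertices $a,b$ are adjacent iff $ab=ba$; $d(B)$ is the degree of vertex $B$. $Tr(R)$ denotes the ring of all $2\times 2$ upper triangular matrices over $R$. *)

theory Defs
  imports "HOL-Number_Theory.Residues"
begin

text \<open>Ring of 2x2 upper triangular matrices [[a,b],[0,c]] over R, encoded as triples (a,b,c).\<close>
definition Tr :: "('a, 'm) ring_scheme \<Rightarrow> ('a \<times> 'a \<times> 'a) ring" where
  "Tr R = \<lparr>carrier = carrier R \<times> carrier R \<times> carrier R,
     monoid.mult = (\<lambda>(a, b, c) (a', b', c').
        (a \<otimes>\<^bsub>R\<^esub> a', (a \<otimes>\<^bsub>R\<^esub> b') \<oplus>\<^bsub>R\<^esub> (b \<otimes>\<^bsub>R\<^esub> c'), c \<otimes>\<^bsub>R\<^esub> c')),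
     one = (\<one>\<^bsub>R\<^esub>, \<zero>\<^bsub>R\<^esub>, \<one>\<^bsub>R\<^esub>),
     zero = (\<zero>\<^bsub>R\<^esub>, \<zero>\<^bsub>R\<^esub>, \<zero>\<^bsub>R\<^esub>),
     add = (\<lambda>(a, b, c) (a', b', c'). (a \<oplus>\<^bsub>R\<^esub> a', b \<oplus>\<^bsub>R\<^esub> b', c \<oplus>\<^bsub>R\<^esub> c'))\<rparr>"

definition ring_center :: "('a, 'm) ring_scheme \<Rightarrow> 'a set" where
  "ring_center S = {x \<in> carrier S. \<forall>y \<in> carrier S. x \<otimes>\<^bsub>S\<^esub> y = y \<otimes>\<^bsub>S\<^esub> x}"

definition cg_vertices :: "('a, 'm) ring_scheme \<Rightarrow> 'a set" where
  "cg_vertices S = carrier S - ring_center S"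

definition cg_degree :: "('a, 'm) ring_scheme \<Rightarrow> 'a \<Rightarrow> nat" where
  "cg_degree S B = card {C \<in> cg_vertices S. C \<noteq> B \<and> B \<otimes>\<^bsub>S\<^esub> C = C \<otimes>\<^bsub>S\<^esub> B}"

definition nz_zero_divisors :: "('a, 'm) ring_scheme \<Rightarrow> 'a set" where
  "nz_zero_divisors R = {m \<in> carrier R. m \<noteq> \<zero>\<^bsub>R\<^esub> \<and>
      (\<exists>y \<in> carrier R. y \<noteq> \<zero>\<^bsub>R\<^esub> \<and> m \<otimes>\<^bsub>R\<^esub> y = \<zero>\<^bsub>R\<^esub>)}"

end

theory Submission
  imports Defs
begin

text \<open>
  Two matrices (a, b, c) and (a', b', c') of Tr(Z/N) commute iff N divides (a - c) b' - b (a' - c'),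
  so the centraliser of (a, b, c) is, up to the free diagonal shift, the kernel of a linear form on
  (Z/N)^2 and has N^2 gcd(a - c, b, N) elements; the degree of a non-central vertex is this number
  minus the N central matrices and the vertex itself. For N = p^n every vertex of A4, A5 or A6 is
  z I + [[m1, m2], [0, 0]] with m1, m2 in X or 0, so its degree only depends on
  gcd(m1, m2, p^n) = p^min(v(m1), v(m2)). Grouping X by valuation r (p^(n-r) - p^(n-r-1) elements
  each) turns the degree sums into sums over r, resp. over pairs (r1, r2) weighted by a function of
  min(r1, r2), which are then evaluated in closed form.
\<close>

section \<open>Counting solutions of linear congruences\<close>

lemma card_residue_class:
  fixes d M r :: int
  assumes "d > 0" "M > 0" "0 \<le> r" "r < M"
  shows "card {y\<in>{0..<d*M}. y mod M = r} = nat d"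
proof -
  have "{y\<in>{0..<d*M}. y mod M = r} = (\<lambda>k. r + k*M) ` {0..<d}"
  proof (rule Set.set_eqI, rule iffI)
    fix y assume y: "y \<in> {y\<in>{0..<d*M}. y mod M = r}"
    have "y mod M = r" using y by simp
    hence "y = r + (y div M) * M" using div_mult_mod_eq[of y M] by linarith
    moreover have "0 \<le> y div M" using y assms by (simp add: pos_imp_zdiv_nonneg_iff)
    moreover have "y div M < d"
    proof -
      have "y div M * M < d * M"
        using div_mult_mod_eq[of y M] y assms by (simp only: mem_Collect_eq atLeastLessThan_iff) linarith
      thus ?thesis using assms by (meson mult_right_less_imp_less less_imp_le)
    qed
    ultimately show "y \<in> (\<lambda>k. r + k*M) ` {0..<d}" by (intro image_eqI[of _ _ "y div M"]) auto
  next
    fix y assume "y \<in> (\<lambda>k. r + k*M) ` {0..<d}"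
    then obtain k where k: "0 \<le> k" "k < d" "y = r + k*M" by auto
    have "k * M \<le> (d - 1) * M" using k assms by (intro mult_right_mono) auto
    hence "y < d * M" using k assms by (simp add: algebra_simps)
    moreover have "y mod M = r" using k assms by simp
    ultimately show "y \<in> {y\<in>{0..<d*M}. y mod M = r}" using k assms by auto
  qed
  moreover have "inj_on (\<lambda>k. r + k*M) {0..<d}" using assms by (auto simp: inj_on_def)
  ultimately show ?thesis by (simp add: card_image)
qed

lemma card_linear_congruence_solutions:
  fixes N t c :: int
  assumes N: "N > 0"
  shows "card {y\<in>{0..<N}. N dvd (t*y - c)} = (if gcd t N dvd c then nat (gcd t N) else 0)"
proof (cases "gcd t N dvd c")
  case False
  have "{y\<in>{0..<N}. N dvd (t*y - c)} = {}"
  proof (rule ccontr)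
    assume "{y\<in>{0..<N}. N dvd (t*y - c)} \<noteq> {}"
    then obtain y where "N dvd (t*y - c)" by auto
    hence "gcd t N dvd (t*y - c)" by (meson dvd_trans gcd_dvd2)
    moreover have "gcd t N dvd t*y" by simp
    ultimately have "gcd t N dvd (t*y - (t*y - c))" by (metis dvd_diff)
    with False show False by simp
  qed
  with False show ?thesis by (simp only: card.empty if_False)
next
  case True
  define d where "d = gcd t N"
  have d0: "d > 0" using N by (simp add: d_def)
  obtain t' where t': "t = d * t'" by (metis d_def gcd_dvd1 dvdE)
  obtain M where M: "N = d * M" by (metis d_def gcd_dvd2 dvdE)
  obtain c' where c': "c = d * c'" using True d_def by (metis dvdE)
  have M0: "M > 0" using N d0 M by (simp add: zero_less_mult_iff)
  have "gcd t N = d * gcd t' M" using t' M d0 by (simp add: gcd_mult_left abs_of_pos)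
  hence "d * gcd t' M = d * 1" using d_def by simp
  hence "coprime t' M" using d0 by (simp only: mult_left_cancel coprime_iff_gcd_eq_1)
  then obtain w where w: "[t' * w = 1] (mod M)" using cong_solve_coprime_int by blast
  define r where "r = (w * c') mod M"
  have solution_iff: "N dvd (t*y - c) \<longleftrightarrow> y mod M = r" for y
  proof -
    have "t*y - c = d * (t'*y - c')" using t' c' by (simp add: algebra_simps)
    hence "N dvd (t*y - c) \<longleftrightarrow> M dvd (t'*y - c')" using M d0 by simp
    also have "\<dots> \<longleftrightarrow> [t'*y = c'] (mod M)" by (simp add: cong_iff_dvd_diff)
    also have "\<dots> \<longleftrightarrow> [y = w*c'] (mod M)"
    proof
      assume "[t'*y = c'] (mod M)"
      hence "[w*(t'*y) = w*c'] (mod M)" by (simp add: cong_scalar_left)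
      moreover have "[w*(t'*y) = y] (mod M)" using cong_scalar_right[OF w, of y] by (simp add: ac_simps)
      ultimately show "[y = w*c'] (mod M)" by (metis cong_sym cong_trans)
    next
      assume "[y = w*c'] (mod M)"
      hence "[t'*y = t'*(w*c')] (mod M)" by (simp add: cong_scalar_left)
      moreover have "[t'*(w*c') = c'] (mod M)" using cong_scalar_right[OF w, of c'] by (simp add: ac_simps)
      ultimately show "[t'*y = c'] (mod M)" by (metis cong_trans)
    qed
    also have "\<dots> \<longleftrightarrow> y mod M = r" by (simp add: r_def cong_def)
    finally show ?thesis .
  qed
  have "{y\<in>{0..<N}. N dvd (t*y - c)} = {y\<in>{0..<d*M}. y mod M = r}" using solution_iff M by auto
  also have "card \<dots> = nat d" using card_residue_class[OF d0 M0, of r] M0 by (simp add: r_def)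
  finally show ?thesis using True d_def by simp
qed

lemma card_multiples_atLeastLessThan:
  fixes N e :: int
  assumes "e > 0" "e dvd N" "N > 0"
  shows "card {x\<in>{0..<N}. e dvd x} = nat (N div e)"
proof -
  have N: "N = (N div e) * e" using assms by simp
  moreover have "N div e > 0" using assms by (simp add: pos_imp_zdiv_pos_iff zdvd_imp_le)
  ultimately have "card {x\<in>{0..<(N div e) * e}. x mod e = 0} = nat (N div e)"
    using card_residue_class[of "N div e" e 0] assms by simp
  moreover have "{x\<in>{0..<N}. e dvd x} = {x\<in>{0..<(N div e) * e}. x mod e = 0}"
    using N by (auto simp: dvd_eq_mod_eq_0)
  ultimately show ?thesis by simp
qed

lemma card_kernel_linear_form_mod:
  fixes N s t :: int
  assumes N: "N > 0"
  shows "card {(x, y). x \<in> {0..<N} \<and> y \<in> {0..<N} \<and> N dvd (s*x + t*y)} = nat (N * gcd (gcd s t) N)"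
proof -
  define d where "d = gcd t N"
  have d0: "d > 0" using N by (simp add: d_def)
  define g where "g = gcd s d"
  have g0: "g > 0" using d0 by (simp add: g_def)
  obtain e where e: "d = g * e" by (metis g_def gcd_dvd2 dvdE)
  obtain s' where s': "s = g * s'" by (metis g_def gcd_dvd1 dvdE)
  have e0: "e > 0" using d0 g0 e by (simp add: zero_less_mult_iff)
  have "gcd s d = g * gcd s' e" using s' e g0 by (simp add: gcd_mult_left abs_of_pos)
  hence "g * gcd s' e = g * 1" using g_def by simp
  hence "coprime s' e" using g0 by (simp only: mult_left_cancel coprime_iff_gcd_eq_1)
  hence solvable_iff: "d dvd s*x \<longleftrightarrow> e dvd x" for x
    using e s' g0 by (simp add: mult.assoc coprime_dvd_mult_right_iff coprime_commute)
  have "e dvd N" using e d_def by (metis dvd_mult_right gcd_dvd2)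
  have fibres: "{(x, y). x \<in> {0..<N} \<and> y \<in> {0..<N} \<and> N dvd (s*x + t*y)}
        = Sigma {0..<N} (\<lambda>x. {y\<in>{0..<N}. N dvd (t*y - (-s*x))})" by (auto simp: add.commute)
  have "card (Sigma {0..<N} (\<lambda>x. {y\<in>{0..<N}. N dvd (t*y - (-s*x))}))
        = (\<Sum>x\<in>{0..<N}. card {y\<in>{0..<N}. N dvd (t*y - (-s*x))})"
    by (intro card_SigmaI finite_atLeastLessThan_int ballI finite_subset[OF _ finite_atLeastLessThan_int[of 0 N]])
      blast
  also have "\<dots> = (\<Sum>x\<in>{0..<N}. if e dvd x then nat d else 0)"
  proof (rule sum.cong[OF refl])
    fix x show "card {y\<in>{0..<N}. N dvd (t*y - (-s*x))} = (if e dvd x then nat d else 0)"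
      using card_linear_congruence_solutions[OF N, of t "-s*x"] solvable_iff[of x] by (simp add: d_def)
  qed
  also have "\<dots> = nat d * card {x\<in>{0..<N}. e dvd x}"
    by (simp add: sum.If_cases Int_def conj_commute)
  also have "\<dots> = nat d * nat (N div e)"
    using card_multiples_atLeastLessThan[OF e0 \<open>e dvd N\<close> N] by simp
  also have "\<dots> = nat (N * g)"
  proof -
    have "d * (N div e) = N * g" using e \<open>e dvd N\<close> e0 by (simp add: ac_simps)
    thus ?thesis by (metis nat_mult_distrib d0 less_imp_le)
  qed
  also have "g = gcd (gcd s t) N" by (simp add: g_def d_def gcd.assoc)
  finally show ?thesis using fibres by simp
qed

section \<open>Commuting graph of Tr(Z/N)\<close>

lemma Tr_residue_carrier: "carrier (Tr (residue_ring N)) = {0..<N} \<times> {0..<N} \<times> {0..<N}"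
  by (auto simp: Tr_def residue_ring_def)

lemma Tr_residue_mult: "(a, b, c) \<otimes>\<^bsub>Tr (residue_ring N)\<^esub> (a', b', c')
   = (a*a' mod N, (a*b' mod N + b*c' mod N) mod N, c*c' mod N)"
  by (simp add: Tr_def residue_ring_def)

lemma Tr_residue_commute_iff:
  "(a, b, c) \<otimes>\<^bsub>Tr (residue_ring N)\<^esub> (a', b', c') = (a', b', c') \<otimes>\<^bsub>Tr (residue_ring N)\<^esub> (a, b, c)
   \<longleftrightarrow> N dvd ((a - c)*b' - b*(a' - c'))"
proof -
  have "(a, b, c) \<otimes>\<^bsub>Tr (residue_ring N)\<^esub> (a', b', c') = (a', b', c') \<otimes>\<^bsub>Tr (residue_ring N)\<^esub> (a, b, c)
     \<longleftrightarrow> (a*b' + b*c') mod N = (a'*b + b'*c) mod N"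
    by (simp add: Tr_residue_mult mod_add_eq ac_simps)
  also have "\<dots> \<longleftrightarrow> N dvd ((a*b' + b*c') - (a'*b + b'*c))" by (rule mod_eq_dvd_iff)
  also have "(a*b' + b*c') - (a'*b + b'*c) = (a - c)*b' - b*(a' - c')" by (simp add: algebra_simps)
  finally show ?thesis .
qed

lemma eq_if_dvd_diff_atLeastLessThan:
  fixes x y N :: int
  assumes "x \<in> {0..<N}" "y \<in> {0..<N}" "N dvd (x - y)"
  shows "x = y"
  using assms by (metis atLeastLessThan_iff mod_eq_dvd_iff mod_pos_pos_trivial)

lemma ring_center_Tr_residue:
  fixes N :: int
  assumes N: "N > 1"
  shows "ring_center (Tr (residue_ring N)) = (\<lambda>z. (z, 0, z)) ` {0..<N}"
proof (rule Set.set_eqI, rule iffI)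
  fix B assume B: "B \<in> ring_center (Tr (residue_ring N))"
  obtain a b c where abc: "B = (a, b, c)" by (cases B) auto
  have range: "a \<in> {0..<N}" "b \<in> {0..<N}" "c \<in> {0..<N}"
    using B abc by (auto simp: ring_center_def Tr_residue_carrier)
  have "(1, 0, 0) \<in> carrier (Tr (residue_ring N))" "(0, 1, 0) \<in> carrier (Tr (residue_ring N))"
    using N by (auto simp: Tr_residue_carrier)
  hence "N dvd ((a - c)*0 - b*(1 - 0))" "N dvd ((a - c)*1 - b*(0 - 0))"
    using B abc unfolding ring_center_def Tr_residue_commute_iff[symmetric] by auto
  hence "N dvd (b - 0)" "N dvd (a - c)" by simp_all
  hence "b = 0" "a = c" using range N by (auto intro: eq_if_dvd_diff_atLeastLessThan)
  thus "B \<in> (\<lambda>z. (z, 0, z)) ` {0..<N}" using abc range by auto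
next
  fix B assume "B \<in> (\<lambda>z. (z, 0::int, z)) ` {0..<N}"
  then obtain z where z: "B = (z, 0, z)" "z \<in> {0..<N}" by auto
  show "B \<in> ring_center (Tr (residue_ring N))"
    unfolding ring_center_def
  proof (intro CollectI conjI ballI)
    show "B \<in> carrier (Tr (residue_ring N))" using z by (auto simp: Tr_residue_carrier)
    fix C assume "C \<in> carrier (Tr (residue_ring N))"
    obtain a' b' c' where "C = (a', b', c')" by (cases C) auto
    thus "B \<otimes>\<^bsub>Tr (residue_ring N)\<^esub> C = C \<otimes>\<^bsub>Tr (residue_ring N)\<^esub> B"
      using z by (simp only: Tr_residue_commute_iff) simp
  qed
qed

text \<open>
  Solutions C = (a', b', c') are parametrised by c' and by the pair ((a' - c') mod N, b'), which ranges
  over the kernel of the linear form (x, y) \<mapsto> (a - c) y - b x.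
\<close>
lemma card_centralizer_Tr_residue:
  fixes N a b c :: int
  assumes N: "N > 0"
  shows "int (card {C \<in> carrier (Tr (residue_ring N)).
            (a, b, c) \<otimes>\<^bsub>Tr (residue_ring N)\<^esub> C = C \<otimes>\<^bsub>Tr (residue_ring N)\<^esub> (a, b, c)})
         = N * N * gcd (gcd (a - c) b) N"
proof -
  define T where "T = Tr (residue_ring N)"
  define K where "K = {(x, y). x \<in> {0..<N} \<and> y \<in> {0..<N} \<and> N dvd ((-b)*x + (a - c)*y)}"
  define f where "f = (\<lambda>((x::int, y::int), c'::int). ((x + c') mod N, y, c'))"
  have commute_iff: "(a, b, c) \<otimes>\<^bsub>T\<^esub> (a', b', c') = (a', b', c') \<otimes>\<^bsub>T\<^esub> (a, b, c)
      \<longleftrightarrow> N dvd ((-b)*((a' - c') mod N) + (a - c)*b')" for a' b' c'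
  proof -
    have shift: "N dvd b * ((a' - c') - (a' - c') mod N)" by (simp add: mod_eq_dvd_iff[symmetric])
    have eq: "(a - c)*b' - b*((a' - c') mod N) = ((a - c)*b' - b*(a' - c')) + b * ((a' - c') - (a' - c') mod N)"
      by (simp add: algebra_simps)
    have "N dvd ((a - c)*b' - b*(a' - c')) \<longleftrightarrow> N dvd ((a - c)*b' - b*((a' - c') mod N))"
      unfolding eq dvd_add_left_iff[OF shift] by (rule refl)
    thus ?thesis unfolding T_def Tr_residue_commute_iff by (simp add: algebra_simps)
  qed
  have "{C \<in> carrier T. (a, b, c) \<otimes>\<^bsub>T\<^esub> C = C \<otimes>\<^bsub>T\<^esub> (a, b, c)} = f ` (K \<times> {0..<N})"
  proof (rule Set.set_eqI, rule iffI)
    fix C assume C: "C \<in> {C \<in> carrier T. (a, b, c) \<otimes>\<^bsub>T\<^esub> C = C \<otimes>\<^bsub>T\<^esub> (a, b, c)}"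
    obtain a' b' c' where abc: "C = (a', b', c')" by (cases C) auto
    have range: "0 \<le> a'" "a' < N" "0 \<le> b'" "b' < N" "0 \<le> c'" "c' < N"
      using C abc by (auto simp: T_def Tr_residue_carrier)
    have "((a' - c') mod N, b') \<in> K" using C abc commute_iff range N by (simp add: K_def)
    moreover have "f (((a' - c') mod N, b'), c') = C"
      using range abc by (simp add: f_def mod_add_left_eq)
    ultimately show "C \<in> f ` (K \<times> {0..<N})" using range by force
  next
    fix C assume "C \<in> f ` (K \<times> {0..<N})"
    then obtain x y c' where xy: "(x, y) \<in> K" "0 \<le> c'" "c' < N" "C = ((x + c') mod N, y, c')"
      by (auto simp: f_def)
    have range: "0 \<le> x" "x < N" "0 \<le> y" "y < N" using xy(1) by (auto simp: K_def)
    have "((x + c') mod N - c') mod N = x" using range by (simp add: mod_diff_left_eq)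
    hence "(a, b, c) \<otimes>\<^bsub>T\<^esub> C = C \<otimes>\<^bsub>T\<^esub> (a, b, c)" using xy commute_iff by (simp add: K_def)
    moreover have "C \<in> carrier T" using xy range N by (simp add: T_def Tr_residue_carrier)
    ultimately show "C \<in> {C \<in> carrier T. (a, b, c) \<otimes>\<^bsub>T\<^esub> C = C \<otimes>\<^bsub>T\<^esub> (a, b, c)}" by simp
  qed
  moreover have "inj_on f (K \<times> {0..<N})"
  proof (rule inj_onI)
    fix u v assume u: "u \<in> K \<times> {0..<N}" and v: "v \<in> K \<times> {0..<N}" and "f u = f v"
    obtain x y c' x2 y2 c2 where uv: "u = ((x, y), c')" "v = ((x2, y2), c2)" by (metis prod.exhaust)
    have eq: "y = y2" "c' = c2" "(x + c') mod N = (x2 + c') mod N" using \<open>f u = f v\<close> uv by (auto simp: f_def)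
    hence "N dvd (x - x2)" by (simp add: mod_eq_dvd_iff)
    hence "x = x2" using u v uv by (auto simp: K_def intro: eq_if_dvd_diff_atLeastLessThan)
    thus "u = v" using uv eq by simp
  qed
  ultimately have "card {C \<in> carrier T. (a, b, c) \<otimes>\<^bsub>T\<^esub> C = C \<otimes>\<^bsub>T\<^esub> (a, b, c)} = card K * card {0..<N}"
    by (simp add: card_image card_cartesian_product)
  moreover have "card K = nat (N * gcd (gcd (-b) (a - c)) N)"
    unfolding K_def by (rule card_kernel_linear_form_mod[OF N])
  ultimately show ?thesis using N by (simp add: T_def gcd.commute)
qed

lemma cg_degree_Tr_residue:
  fixes N a b c :: int
  assumes N: "N > 1" and range: "a \<in> {0..<N}" "b \<in> {0..<N}" "c \<in> {0..<N}"
    and noncentral: "\<not> (b = 0 \<and> a = c)"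
  shows "int (cg_degree (Tr (residue_ring N)) (a, b, c)) = N * N * gcd (gcd (a - c) b) N - N - 1"
proof -
  define T where "T = Tr (residue_ring N)"
  define S where "S = {C \<in> carrier T. (a, b, c) \<otimes>\<^bsub>T\<^esub> C = C \<otimes>\<^bsub>T\<^esub> (a, b, c)}"
  define Z where "Z = ring_center T"
  have Z: "Z = (\<lambda>z. (z, 0, z)) ` {0..<N}" using ring_center_Tr_residue[OF N] by (simp add: Z_def T_def)
  have "finite S" by (rule finite_subset[of _ "{0..<N} \<times> {0..<N} \<times> {0..<N}"]) (auto simp: S_def T_def Tr_residue_carrier)
  have "(a, b, c) \<in> carrier T" using range by (simp add: T_def Tr_residue_carrier)
  hence "Z \<subseteq> S" "(a, b, c) \<in> S" by (auto simp: Z_def ring_center_def S_def)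
  moreover have "(a, b, c) \<notin> Z" using noncentral Z by auto
  ultimately have "Z \<subset> S" by auto
  have "{C \<in> cg_vertices T. C \<noteq> (a, b, c) \<and> (a, b, c) \<otimes>\<^bsub>T\<^esub> C = C \<otimes>\<^bsub>T\<^esub> (a, b, c)} = (S - Z) - {(a, b, c)}"
    by (auto simp: cg_vertices_def S_def Z_def)
  hence "cg_degree T (a, b, c) = card ((S - Z) - {(a, b, c)})" by (simp add: cg_degree_def)
  also have "\<dots> = card (S - Z) - 1"
    using \<open>finite S\<close> \<open>(a, b, c) \<in> S\<close> \<open>(a, b, c) \<notin> Z\<close> by (simp add: card_Diff_singleton)
  also have "\<dots> = card S - card Z - 1"
    using \<open>finite S\<close> \<open>Z \<subseteq> S\<close> by (simp add: card_Diff_subset finite_subset)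
  finally have "int (cg_degree T (a, b, c)) = int (card S) - int (card Z) - 1"
    using psubset_card_mono[OF \<open>finite S\<close> \<open>Z \<subset> S\<close>] by simp
  moreover have "card Z = nat N" using Z by (simp add: card_image inj_on_def)
  moreover have "int (card S) = N * N * gcd (gcd (a - c) b) N"
    unfolding S_def T_def using card_centralizer_Tr_residue N by simp
  ultimately show ?thesis using N by (simp add: T_def)
qed

section \<open>Zero divisors of Z/p^n graded by valuation\<close>

lemma nz_zero_divisors_residue_prime_power:
  fixes p :: int
  assumes p: "prime p" and n: "n \<ge> 1"
  shows "nz_zero_divisors (residue_ring (p^n)) = {m. 1 \<le> m \<and> m < p^n \<and> p dvd m}"
proof (rule Set.set_eqI, rule iffI)
  fix m assume "m \<in> nz_zero_divisors (residue_ring (p^n))"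
  then obtain y where y: "0 \<le> y" "y < p^n" "y \<noteq> 0" "(m*y) mod p^n = 0" and m: "0 \<le> m" "m < p^n" "m \<noteq> 0"
    by (auto simp: nz_zero_divisors_def residue_ring_def)
  have "p dvd m"
  proof (rule ccontr)
    assume "\<not> p dvd m"
    hence "coprime (p^n) m" using p by (simp add: prime_imp_coprime)
    moreover have "p^n dvd m*y" using y by (simp add: mod_eq_0_iff_dvd)
    ultimately have "p^n dvd y" by (simp add: coprime_dvd_mult_right_iff)
    with y show False by (simp add: zdvd_imp_le leD)
  qed
  thus "m \<in> {m. 1 \<le> m \<and> m < p^n \<and> p dvd m}" using m by auto
next
  have p1: "p > 1" using p by (simp add: prime_gt_1_int)
  fix m assume "m \<in> {m. 1 \<le> m \<and> m < p^n \<and> p dvd m}"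
  hence m: "1 \<le> m" "m < p^n" "p dvd m" by auto
  then obtain k where k: "m = p * k" by auto
  have "p^(n-1) < p^n" using p1 n by (simp add: power_strict_increasing)
  moreover have "m * p^(n-1) = k * p^n" using k n by (simp add: power_eq_if mult_ac)
  ultimately show "m \<in> nz_zero_divisors (residue_ring (p^n))"
    using m p1 by (auto simp: nz_zero_divisors_def residue_ring_def intro!: bexI[of _ "p^(n-1)"])
qed

definition residues_of_valuation :: "int \<Rightarrow> nat \<Rightarrow> nat \<Rightarrow> int set" where
  "residues_of_valuation p n r = {m. 1 \<le> m \<and> m < p^n \<and> p^r dvd m \<and> \<not> p^(Suc r) dvd m}"

lemma finite_residues_of_valuation: "finite (residues_of_valuation p n r)"
  unfolding residues_of_valuation_def
  by (rule finite_subset[OF _ finite_atLeastLessThan_int[of 0 "p^n"]]) auto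

lemma residues_of_valuation_disjoint:
  assumes "r \<noteq> s"
  shows "residues_of_valuation p n r \<inter> residues_of_valuation p n s = {}"
proof -
  have *: "residues_of_valuation p n r \<inter> residues_of_valuation p n s = {}" if "r < s" for r s
  proof -
    have "p^(Suc r) dvd p^s" by (rule le_imp_power_dvd) (use that in simp)
    thus ?thesis by (auto simp: residues_of_valuation_def intro: dvd_trans)
  qed
  show ?thesis using assms *[of r s] *[of s r] by (cases "r < s") (auto simp: Int_commute)
qed

lemma multiples_of_prime_eq_UN_residues_of_valuation:
  fixes p :: int
  assumes p: "prime p"
  shows "{m. 1 \<le> m \<and> m < p^n \<and> p dvd m} = (\<Union>r\<in>{1..n-1}. residues_of_valuation p n r)"
proof (rule Set.set_eqI, rule iffI)
  fix m assume "m \<in> {m. 1 \<le> m \<and> m < p^n \<and> p dvd m}"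
  hence m: "1 \<le> m" "m < p^n" "p dvd m" by auto
  define r where "r = multiplicity p m"
  have "\<not> is_unit p" "m \<noteq> 0" using p m by (auto simp: not_prime_unit)
  note val = power_dvd_iff_le_multiplicity[OF \<open>m \<noteq> 0\<close> \<open>\<not> is_unit p\<close>]
  have "p^r dvd m" "\<not> p^(Suc r) dvd m" "r \<ge> 1" using val[of r] val[of "Suc r"] val[of 1] m by (simp_all add: r_def)
  moreover have "r < n"
  proof -
    have "p^r \<le> m" using \<open>p^r dvd m\<close> m by (simp add: zdvd_imp_le)
    hence "p^r < p^n" using m by simp
    thus ?thesis using p by (simp add: prime_gt_1_int)
  qed
  ultimately show "m \<in> (\<Union>r\<in>{1..n-1}. residues_of_valuation p n r)"
    using m by (auto simp: residues_of_valuation_def intro!: bexI[of _ r])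
next
  fix m assume "m \<in> (\<Union>r\<in>{1..n-1}. residues_of_valuation p n r)"
  then obtain r where r: "r \<ge> 1" "m \<in> residues_of_valuation p n r" by auto
  have "p dvd p^r" using r by simp
  thus "m \<in> {m. 1 \<le> m \<and> m < p^n \<and> p dvd m}"
    using r by (auto simp: residues_of_valuation_def intro: dvd_trans)
qed

lemma gcd_residues_of_valuation:
  fixes p :: int
  assumes p: "prime p" and r: "r < n" and m: "m \<in> residues_of_valuation p n r"
  shows "gcd m (p^n) = p^r"
proof -
  obtain k where k: "m = p^r * k" using m by (auto simp: residues_of_valuation_def)
  have "\<not> p dvd k" using m k by (auto simp: residues_of_valuation_def)
  hence "coprime p k" using p by (simp add: prime_imp_coprime)
  hence "coprime k (p^(n-r))" by (simp add: coprime_commute)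
  have "p^n = p^r * p^(n-r)" using r by (simp flip: power_add)
  hence "gcd m (p^n) = p^r * gcd k (p^(n-r))"
    using k p by (simp add: gcd_mult_left prime_ge_0_int)
  thus ?thesis using \<open>coprime k (p^(n-r))\<close> by simp
qed

lemma card_residues_of_valuation:
  fixes p :: int
  assumes p: "prime p" and r: "r < n"
  shows "int (card (residues_of_valuation p n r)) = p^(n-r) - p^(n-r-1)"
proof -
  have p1: "p > 1" using p by (simp add: prime_gt_1_int)
  define D where "D s = {x\<in>{0..<p^n}. p^s dvd x}" for s
  have card_D: "int (card (D s)) = p^(n-s)" if "s \<le> n" for s
  proof -
    have "p^n = p^s * p^(n-s)" using that by (simp flip: power_add)
    hence "p^s dvd p^n" "p^n div p^s = p^(n-s)" using p1 by auto
    thus ?thesis unfolding D_def using card_multiples_atLeastLessThan[of "p^s" "p^n"] p1 by simp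
  qed
  have "residues_of_valuation p n r = D r - D (Suc r)"
  proof (rule Set.set_eqI, rule iffI)
    fix x assume "x \<in> D r - D (Suc r)"
    moreover from this have "x \<noteq> 0" by (auto simp: D_def)
    ultimately show "x \<in> residues_of_valuation p n r" by (auto simp: residues_of_valuation_def D_def)
  qed (auto simp: residues_of_valuation_def D_def)
  moreover have "D (Suc r) \<subseteq> D r" unfolding D_def by (auto intro: dvd_trans[rotated])
  moreover have "finite (D r)" unfolding D_def by (rule finite_subset[OF _ finite_atLeastLessThan_int]) blast
  ultimately have "int (card (residues_of_valuation p n r)) = int (card (D r)) - int (card (D (Suc r)))"
    by (simp add: card_Diff_subset finite_subset card_mono)
  also have "\<dots> = p^(n-r) - p^(n - Suc r)" using card_D r by simp
  finally show ?thesis by simp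
qed

lemma sum_gcd_multiples_of_prime:
  fixes p :: int and F :: "int \<Rightarrow> int"
  assumes p: "prime p"
  shows "(\<Sum>m\<in>{m. 1 \<le> m \<and> m < p^n \<and> p dvd m}. F (gcd m (p^n)))
       = (\<Sum>r = 1..n-1. (p^(n-r) - p^(n-r-1)) * F (p^r))"
proof -
  have "(\<Sum>m\<in>{m. 1 \<le> m \<and> m < p^n \<and> p dvd m}. F (gcd m (p^n)))
      = (\<Sum>r = 1..n-1. \<Sum>m\<in>residues_of_valuation p n r. F (gcd m (p^n)))"
    unfolding multiples_of_prime_eq_UN_residues_of_valuation[OF p]
    by (rule sum.UNION_disjoint) (auto simp: finite_residues_of_valuation dest: residues_of_valuation_disjoint)
  also have "\<dots> = (\<Sum>r = 1..n-1. \<Sum>m\<in>residues_of_valuation p n r. F (p^r))"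
  proof (intro sum.cong refl)
    fix r m assume "r \<in> {1..n-1}" "m \<in> residues_of_valuation p n r"
    moreover from this have "r < n" by auto
    ultimately show "F (gcd m (p^n)) = F (p^r)" using gcd_residues_of_valuation[OF p] by simp
  qed
  also have "\<dots> = (\<Sum>r = 1..n-1. (p^(n-r) - p^(n-r-1)) * F (p^r))"
    using card_residues_of_valuation[OF p] by (intro sum.cong refl) auto
  finally show ?thesis .
qed

lemma sum_gcd_pairs_multiples_of_prime:
  fixes p :: int and n :: nat and F :: "int \<Rightarrow> int"
  assumes p: "prime p"
  defines "X \<equiv> {m. 1 \<le> m \<and> m < p^n \<and> p dvd m}"
  shows "(\<Sum>(m1, m2)\<in>X \<times> X. F (gcd (gcd m1 m2) (p^n)))
       = (\<Sum>i = 1..n-1. \<Sum>j = 1..n-1.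
            (p^(n-i) - p^(n-i-1)) * (p^(n-j) - p^(n-j-1)) * F (p^(min i j)))"
proof -
  have gcd_pow: "gcd (p^i) (p^j) = p^(min i j)" for i j
    using p by (simp add: min_def le_imp_power_dvd gcd_proj1_if_dvd gcd_proj2_if_dvd prime_ge_0_int)
  have "(\<Sum>(m1, m2)\<in>X \<times> X. F (gcd (gcd m1 m2) (p^n)))
      = (\<Sum>m1\<in>X. \<Sum>m2\<in>X. F (gcd (gcd m1 (p^n)) (gcd m2 (p^n))))"
    by (simp add: sum.cartesian_product gcd.assoc gcd.left_commute)
  also have "\<dots> = (\<Sum>m1\<in>X. \<Sum>j = 1..n-1. (p^(n-j) - p^(n-j-1)) * F (gcd (gcd m1 (p^n)) (p^j)))"
    unfolding X_def by (intro sum.cong refl sum_gcd_multiples_of_prime[OF p])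
  also have "\<dots> = (\<Sum>j = 1..n-1. (p^(n-j) - p^(n-j-1)) * (\<Sum>m1\<in>X. F (gcd (gcd m1 (p^n)) (p^j))))"
    by (subst sum.swap) (simp add: sum_distrib_left)
  also have "\<dots> = (\<Sum>j = 1..n-1. (p^(n-j) - p^(n-j-1)) *
                     (\<Sum>i = 1..n-1. (p^(n-i) - p^(n-i-1)) * F (gcd (p^i) (p^j))))"
    unfolding X_def by (intro sum.cong refl arg_cong2[where f = "(*)"] sum_gcd_multiples_of_prime[OF p])
  also have "\<dots> = (\<Sum>i = 1..n-1. \<Sum>j = 1..n-1.
                     (p^(n-i) - p^(n-i-1)) * (p^(n-j) - p^(n-j-1)) * F (p^(min i j)))"
    by (subst sum.swap) (simp add: sum_distrib_left gcd_pow mult_ac)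
  finally show ?thesis .
qed

section \<open>Degree sums over scalar translates\<close>

lemma gcd_gcd_eq_if_dvd_diff:
  fixes x y b N :: int
  assumes "N dvd (x - y)"
  shows "gcd (gcd x b) N = gcd (gcd y b) N"
proof -
  have dvd: "gcd (gcd x b) N dvd gcd (gcd y b) N" if "N dvd (x - y)" for x y :: int
  proof -
    have "gcd (gcd x b) N dvd x - (x - y)" using that by (meson dvd_diff dvd_trans gcd_dvd1 gcd_dvd2)
    thus ?thesis by (simp add: dvd_trans[OF gcd_dvd1 gcd_dvd2])
  qed
  have "N dvd (y - x)" using assms by (simp add: dvd_diff_commute)
  show ?thesis by (rule zdvd_antisym_nonneg[OF _ _ dvd[OF assms] dvd[OF \<open>N dvd (y - x)\<close>]]) simp_all
qed

text \<open>The triple ((m1 + z) mod N, m2, z) encodes the matrix [[m1 + z, m2], [0, z]] = z I + [[m1, m2], [0, 0]].\<close>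
definition scalar_translates :: "int \<Rightarrow> (int \<times> int) set \<Rightarrow> (int \<times> int \<times> int) set" where
  "scalar_translates N M = {((m1 + z) mod N, m2, z) | m1 m2 z. (m1, m2) \<in> M \<and> z \<in> {0..<N}}"

lemma sum_cg_degree_scalar_translates:
  fixes N :: int
  assumes N: "N > 1" and M: "M \<subseteq> {0..<N} \<times> {0..<N}" "(0, 0) \<notin> M"
  shows "int (\<Sum>B\<in>scalar_translates N M. cg_degree (Tr (residue_ring N)) B)
       = (\<Sum>(m1, m2)\<in>M. N * (N * N * gcd (gcd m1 m2) N - N - 1))"
proof -
  define f where "f = (\<lambda>((m1, m2 :: int), z). ((m1 + z) mod N, m2, z))"
  have translates: "scalar_translates N M = f ` (M \<times> {0..<N})"
    by (force simp: scalar_translates_def f_def)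
  have "inj_on f (M \<times> {0..<N})"
  proof (rule inj_onI, clarsimp simp: f_def)
    fix m1 m1' m2 z assume "(m1, m2) \<in> M" "(m1', m2) \<in> M" "(m1 + z) mod N = (m1' + z) mod N"
    thus "m1 = m1'" using M(1) by (auto simp: mod_eq_dvd_iff intro: eq_if_dvd_diff_atLeastLessThan)
  qed
  moreover have degree: "int (cg_degree (Tr (residue_ring N)) (f ((m1, m2), z)))
                           = N * N * gcd (gcd m1 m2) N - N - 1"
    if m: "(m1, m2) \<in> M" and z: "z \<in> {0..<N}" for m1 m2 z
  proof -
    have range: "m1 \<in> {0..<N}" "m2 \<in> {0..<N}" using m M(1) by auto
    have "N dvd (((m1 + z) mod N - z) - m1)"
      by (simp add: mod_eq_dvd_iff[symmetric] mod_diff_left_eq)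
    hence gcd_eq: "gcd (gcd ((m1 + z) mod N - z) m2) N = gcd (gcd m1 m2) N"
      by (rule gcd_gcd_eq_if_dvd_diff)
    have "\<not> (m2 = 0 \<and> (m1 + z) mod N = z)"
    proof
      assume "m2 = 0 \<and> (m1 + z) mod N = z"
      hence "m2 = 0" "(m1 + z) mod N = z mod N" using z by simp_all
      hence "m2 = 0" "N dvd (m1 + z - z)" by (simp_all only: mod_eq_dvd_iff)
      hence "m2 = 0" "N dvd (m1 - 0)" by simp_all
      hence "m1 = 0" using range N by (auto intro: eq_if_dvd_diff_atLeastLessThan)
      with m M(2) \<open>m2 = 0\<close> show False by simp
    qed
    thus ?thesis using cg_degree_Tr_residue[OF N] range z N by (simp add: f_def gcd_eq)
  qed
  ultimately have "int (\<Sum>B\<in>scalar_translates N M. cg_degree (Tr (residue_ring N)) B)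
      = (\<Sum>x\<in>M \<times> {0..<N}. int (cg_degree (Tr (residue_ring N)) (f x)))"
    unfolding translates by (simp add: sum.reindex)
  also have "\<dots> = (\<Sum>((m1, m2), z)\<in>M \<times> {0..<N}. N * N * gcd (gcd m1 m2) N - N - 1)"
    by (intro sum.cong refl) (clarsimp simp: degree)
  also have "\<dots> = (\<Sum>(m1, m2)\<in>M. N * (N * N * gcd (gcd m1 m2) N - N - 1))"
    unfolding sum.cartesian_product[symmetric] using N by (simp add: split_beta mult.commute)
  finally show ?thesis .
qed

lemma scalar_translates_residue_ring:
  fixes N :: int and X :: "int set"
  defines "R \<equiv> residue_ring N"
  shows "{(m \<oplus>\<^bsub>R\<^esub> z, \<zero>\<^bsub>R\<^esub>, z) | m z. m \<in> X \<and> z \<in> carrier R} = scalar_translates N (X \<times> {0})"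
    and "{(z, m, z) | m z. m \<in> X \<and> z \<in> carrier R} = scalar_translates N ({0} \<times> X)"
    and "{(m1 \<oplus>\<^bsub>R\<^esub> z, m2, z) | m1 m2 z. m1 \<in> X \<and> m2 \<in> X \<and> z \<in> carrier R} = scalar_translates N (X \<times> X)"
  unfolding scalar_translates_def by (force simp: R_def residue_ring_def)+

lemma sum_cg_degree_translates_multiples_of_prime:
  fixes p :: int
  assumes p: "prime p" and n: "n \<ge> 1"
  defines "X \<equiv> {m. 1 \<le> m \<and> m < p^n \<and> p dvd m}"
  shows "int (\<Sum>B\<in>scalar_translates (p^n) (X \<times> {0}). cg_degree (Tr (residue_ring (p^n))) B)
           = (\<Sum>r = 1..n-1. (p^(n-r) - p^(n-r-1)) * (p^n * (p^n * p^n * p^r - p^n - 1)))"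
    and "int (\<Sum>B\<in>scalar_translates (p^n) ({0} \<times> X). cg_degree (Tr (residue_ring (p^n))) B)
           = (\<Sum>r = 1..n-1. (p^(n-r) - p^(n-r-1)) * (p^n * (p^n * p^n * p^r - p^n - 1)))"
    and "int (\<Sum>B\<in>scalar_translates (p^n) (X \<times> X). cg_degree (Tr (residue_ring (p^n))) B)
           = (\<Sum>i = 1..n-1. \<Sum>j = 1..n-1. (p^(n-i) - p^(n-i-1)) * (p^(n-j) - p^(n-j-1))
                                        * (p^n * (p^n * p^n * p^(min i j) - p^n - 1)))"
proof -
  define G where "G g = p^n * (p^n * p^n * g - p^n - 1)" for g
  have "p^n > 1" using p n by (simp add: prime_gt_1_int)
  have degree_sum: "int (\<Sum>B\<in>scalar_translates (p^n) M. cg_degree (Tr (residue_ring (p^n))) B)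
                      = (\<Sum>(m1, m2)\<in>M. G (gcd (gcd m1 m2) (p^n)))"
    if "M \<in> {X \<times> {0}, {0} \<times> X, X \<times> X}" for M
  proof -
    have "M \<subseteq> {0..<p^n} \<times> {0..<p^n}" "(0, 0) \<notin> M" using that \<open>p^n > 1\<close> by (auto simp: X_def)
    thus ?thesis unfolding G_def by (rule sum_cg_degree_scalar_translates[OF \<open>p^n > 1\<close>])
  qed
  have "(\<Sum>m\<in>X. G (gcd m (p^n))) = (\<Sum>r = 1..n-1. (p^(n-r) - p^(n-r-1)) * G (p^r))"
    unfolding X_def by (rule sum_gcd_multiples_of_prime[OF p])
  thus "int (\<Sum>B\<in>scalar_translates (p^n) (X \<times> {0}). cg_degree (Tr (residue_ring (p^n))) B)
           = (\<Sum>r = 1..n-1. (p^(n-r) - p^(n-r-1)) * (p^n * (p^n * p^n * p^r - p^n - 1)))"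
    and "int (\<Sum>B\<in>scalar_translates (p^n) ({0} \<times> X). cg_degree (Tr (residue_ring (p^n))) B)
           = (\<Sum>r = 1..n-1. (p^(n-r) - p^(n-r-1)) * (p^n * (p^n * p^n * p^r - p^n - 1)))"
    using degree_sum[of "X \<times> {0}"] degree_sum[of "{0} \<times> X"]
    by (simp_all add: sum.cartesian_product[symmetric] G_def)
  show "int (\<Sum>B\<in>scalar_translates (p^n) (X \<times> X). cg_degree (Tr (residue_ring (p^n))) B)
           = (\<Sum>i = 1..n-1. \<Sum>j = 1..n-1. (p^(n-i) - p^(n-i-1)) * (p^(n-j) - p^(n-j-1))
                                        * (p^n * (p^n * p^n * p^(min i j) - p^n - 1)))"
    using degree_sum[of "X \<times> X"] sum_gcd_pairs_multiples_of_prime[OF p, where F = G]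
    by (simp add: X_def G_def)
qed

section \<open>Closed forms\<close>

lemma power_diff_exponents:
  fixes P :: "'a::field"
  assumes P: "P \<noteq> 0" and r: "r < n"
  shows "P^(n-r) = P^n / P^r" "P^(n-r-1) = P^n / (P^r * P)" "P^(2*n-1) = P^n * P^n / P"
    "P^(2*n) = P^n * P^n" "P^(3*n) = P^n * P^n * P^n" "P^(2*r) = P^r * P^r"
    "P^(3*n-2*r-2) = P^n * P^n * P^n / (P^r * P^r * P * P)" "P^(2*n+r) = P^n * P^n * P^r"
proof -
  have sub: "P^(m - k) = P^m / P^k" if "k \<le> m" for m k using P that by (rule power_diff)
  show "P^(n-r) = P^n / P^r" "P^(n-r-1) = P^n / (P^r * P)" "P^(2*n-1) = P^n * P^n / P"
    using r by (simp_all add: sub mult_2 power_add)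
  show "P^(3*n-2*r-2) = P^n * P^n * P^n / (P^r * P^r * P * P)"
    using r by (simp add: sub mult_2 numeral_3_eq_3 power_add) (simp add: ac_simps)
  show "P^(2*n) = P^n * P^n" "P^(3*n) = P^n * P^n * P^n" "P^(2*r) = P^r * P^r" "P^(2*n+r) = P^n * P^n * P^r"
    by (simp_all add: mult_2 numeral_3_eq_3 power_add)
qed

lemma sum_power_diff_telescope:
  fixes P :: "'a::comm_ring_1"
  assumes "i \<le> n"
  shows "(\<Sum>j = i..n-1. P^(n-j) - P^(n-j-1)) = P^(n-i) - 1"
  using assms
proof (induction i rule: inc_induct)
  case base
  thus ?case by simp
next
  case (step i)
  have "{i..n-1} = insert i {Suc i..n-1}" using step.hyps by auto
  hence "(\<Sum>j = i..n-1. P^(n-j) - P^(n-j-1)) = (P^(n-i) - P^(n-i-1)) + (P^(n - Suc i) - 1)"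
    using step.IH by simp
  thus ?case by simp
qed

lemma sum_square_min:
  fixes c H :: "nat \<Rightarrow> 'a::comm_ring_1"
  shows "(\<Sum>i = 1..m. \<Sum>j = 1..m. c i * c j * H (min i j))
       = 2 * (\<Sum>i = 1..m. c i * H i * (\<Sum>j = i..m. c j)) - (\<Sum>i = 1..m. c i * c i * H i)"
proof -
  define A where "A = (\<Sum>i = 1..m. \<Sum>j = 1..m. if i \<le> j then c i * c j * H i else 0)"
  define B where "B = (\<Sum>i = 1..m. \<Sum>j = 1..m. if i < j then c i * c j * H i else 0)"
  define D where "D = (\<Sum>i = 1..m. c i * c i * H i)"
  have "(\<Sum>i = 1..m. \<Sum>j = 1..m. c i * c j * H (min i j))
      = A + (\<Sum>i = 1..m. \<Sum>j = 1..m. if j < i then c i * c j * H j else 0)"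
    unfolding A_def sum.distrib[symmetric] by (intro sum.cong refl) (auto simp: min_def)
  also have "(\<Sum>i = 1..m. \<Sum>j = 1..m. if j < i then c i * c j * H j else 0) = B"
    unfolding B_def by (subst sum.swap) (intro sum.cong refl, simp add: ac_simps)
  also have "A = B + D"
  proof -
    have "A = (\<Sum>i = 1..m. \<Sum>j = 1..m. (if i < j then c i * c j * H i else 0)
                                        + (if i = j then c i * c j * H i else 0))"
      unfolding A_def by (intro sum.cong refl) auto
    thus ?thesis unfolding B_def D_def sum.distrib by simp
  qed
  moreover have "A = (\<Sum>i = 1..m. c i * H i * (\<Sum>j = i..m. c j))"
    unfolding A_def
  proof (intro sum.cong refl)
    fix i assume "i \<in> {1..m}"
    hence "{j \<in> {1..m}. i \<le> j} = {i..m}" by auto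
    thus "(\<Sum>j = 1..m. if i \<le> j then c i * c j * H i else 0) = c i * H i * (\<Sum>j = i..m. c j)"
      by (simp add: sum.inter_filter[symmetric] sum_distrib_left mult_ac)
  qed
  ultimately show ?thesis unfolding D_def by (simp add: algebra_simps)
qed

lemma sum_valuation_weights_closed_form:
  fixes P :: real
  assumes P: "P \<noteq> 0"
  shows "(\<Sum>r = 1..n-1. (P^(n-r) - P^(n-r-1)) * (P^n * (P^n * P^n * P^r - P^n - 1)))
       = (P - 1) * P^(2*n-1) * (\<Sum>r = 1..n-1. P^(2*n) - P^(n-r) - 1 / P^r)"
proof -
  have "(P^(n-r) - P^(n-r-1)) * (P^n * (P^n * P^n * P^r - P^n - 1))
      = (P - 1) * P^(2*n-1) * (P^(2*n) - P^(n-r) - 1 / P^r)" if "r \<in> {1..n-1}" for r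
  proof -
    have "r < n" using that by auto
    show ?thesis unfolding power_diff_exponents[OF P \<open>r < n\<close>] using P by (simp add: field_simps)
  qed
  thus ?thesis by (simp add: sum_distrib_left)
qed

lemma sum_valuation_pair_weights_closed_form:
  fixes P :: real
  assumes P: "P \<noteq> 0"
  shows "(\<Sum>i = 1..n-1. \<Sum>j = 1..n-1. (P^(n-i) - P^(n-i-1)) * (P^(n-j) - P^(n-j-1))
                                        * (P^n * (P^n * P^n * P^(min i j) - P^n - 1)))
       = 2 * ((P - 1) * P^(2*n-1) * (\<Sum>r = 1..n-1. (P^(3*n) + P^n + 1) / P^r
                                    - (P^(2*n) + P^n) / P^(2*r) - P^(2*n)))
         - (P - 1)^2 * (\<Sum>r = 1..n-1. P^(3*n - 2*r - 2) * (P^(2*n + r) - P^n - 1))"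
proof -
  define c where "c r = P^(n-r) - P^(n-r-1)" for r
  define H where "H r = P^n * (P^n * P^n * P^r - P^n - 1)" for r
  have "c r * H r * (\<Sum>j = r..n-1. c j)
      = (P - 1) * P^(2*n-1) * ((P^(3*n) + P^n + 1) / P^r - (P^(2*n) + P^n) / P^(2*r) - P^(2*n))"
    if "r \<in> {1..n-1}" for r
  proof -
    have "r < n" using that by auto
    hence tail: "(\<Sum>j = r..n-1. c j) = P^(n-r) - 1"
      unfolding c_def by (intro sum_power_diff_telescope) simp
    show ?thesis unfolding tail unfolding c_def H_def power_diff_exponents[OF P \<open>r < n\<close>]
      using P by (simp add: field_simps)
  qed
  moreover have "c r * c r * H r = (P - 1)^2 * (P^(3*n - 2*r - 2) * (P^(2*n + r) - P^n - 1))"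
    if "r \<in> {1..n-1}" for r
  proof -
    have "r < n" using that by auto
    show ?thesis unfolding c_def H_def power_diff_exponents[OF P \<open>r < n\<close>]
      using P by (simp add: field_simps power2_eq_square)
  qed
  ultimately show ?thesis
    using sum_square_min[of c H "n-1"] by (simp add: c_def H_def sum_distrib_left mult.assoc)
qed

theorem corollary2p8:
  fixes p :: int and n :: nat
  assumes "prime p" and "n \<ge> 2"
  defines "R \<equiv> residue_ring (p ^ n)"
  defines "T \<equiv> Tr R"
  defines "X \<equiv> nz_zero_divisors R"
  defines "A4 \<equiv> {(m \<oplus>\<^bsub>R\<^esub> z, \<zero>\<^bsub>R\<^esub>, z) | m z. m \<in> X \<and> z \<in> carrier R}"
  defines "A5 \<equiv> {(z, m, z) | m z. m \<in> X \<and> z \<in> carrier R}"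
  defines "A6 \<equiv> {(m1 \<oplus>\<^bsub>R\<^esub> z, m2, z) | m1 m2 z. m1 \<in> X \<and> m2 \<in> X \<and> z \<in> carrier R}"
  defines "dA \<equiv> (\<lambda>A. real (\<Sum>B\<in>A. cg_degree T B))"
  defines "\<alpha> \<equiv> (real_of_int p - 1) * real_of_int p ^ (2*n - 1) *
      (\<Sum>r = 1..n-1. (real_of_int p ^ (3*n) + real_of_int p ^ n + 1) / real_of_int p ^ r
                     - (real_of_int p ^ (2*n) + real_of_int p ^ n) / real_of_int p ^ (2*r)
                     - real_of_int p ^ (2*n))"
  defines "\<beta> \<equiv> (real_of_int p - 1)^2 *
      (\<Sum>r = 1..n-1. real_of_int p ^ (3*n - 2*r - 2) *
                     (real_of_int p ^ (2*n + r) - real_of_int p ^ n - 1))"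
  shows "dA A4 = (real_of_int p - 1) * real_of_int p ^ (2*n - 1) *
            (\<Sum>r = 1..n-1. real_of_int p ^ (2*n) - real_of_int p ^ (n - r) - 1 / real_of_int p ^ r)
       \<and> dA A5 = dA A4
       \<and> dA A6 = 2 * \<alpha> - \<beta>"
proof -
  have "n \<ge> 1" "real_of_int p \<noteq> 0" using assms by (auto simp: prime_gt_1_int)
  have "X = {m. 1 \<le> m \<and> m < p^n \<and> p dvd m}"
    using nz_zero_divisors_residue_prime_power[OF assms(1) \<open>n \<ge> 1\<close>] by (simp add: X_def R_def)
  hence A: "A4 = scalar_translates (p^n) (X \<times> {0})" "A5 = scalar_translates (p^n) ({0} \<times> X)"
    "A6 = scalar_translates (p^n) (X \<times> X)"
    unfolding A4_def A5_def A6_def R_def by (simp_all only: scalar_translates_residue_ring)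
  have dA_int: "dA A = real_of_int (int (\<Sum>B\<in>A. cg_degree (Tr (residue_ring (p^n))) B))" for A
    by (simp add: dA_def T_def R_def)
  show ?thesis
    unfolding dA_int A \<open>X = _\<close> sum_cg_degree_translates_multiples_of_prime[OF assms(1) \<open>n \<ge> 1\<close>]
      \<alpha>_def \<beta>_def
    using sum_valuation_weights_closed_form[OF \<open>real_of_int p \<noteq> 0\<close>]
      sum_valuation_pair_weights_closed_form[OF \<open>real_of_int p \<noteq> 0\<close>]
    by simp
qed

end
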